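(* Let $\bar f$ be interval Riemann integrable on $[a,b]$ and define $\bar F:[a,b]\to\mathbb{R}_\mathcal{I}$ by $\bar F(t)=(IR)\int_a^t\bar f(s)\,ds$. Then $\bar F$ is continuous on $[a,b]$, and $\bar F'(x)=\bar f(x)$ at every point $x$ at which $\bar f$ is continuous.
   Context: An interval number is a closed interval $\bar a=[a_l,a_r]$ with $a_l<a_r$ real; $\mathbb{R}_\mathcal{I}$ is the set of interval numbers. Write $a_c=(a_l+a_r)/2$, $a_w=(a_r-a_l)/2>0$, $\bar a=\langle a_c;a_w\rangle=[a_c-a_w,a_c+a_w]$. Operations: $\bar a+\bar b=\langle a_c+b_c;a_wb_w\rangle$, $\bar a-\bar b=\langle a_c-b_c;a_w/b_w\rangle$, $k\bar a=\langle ka_c;a_w^k\rangle$ for real $k$; for real $h\ne0$, $\bar c/h=\langle c_c/h;c_w^{1/h}\rangle$. Distance $d(\bar a,\bar b)=\sqrt{(a_c-b_c)^2+(\ln a_w-\ln b_w)^2}$; continuity and limits w.r.t. $d$. Derivative: $\bar F'(x)=\lim_{h\to0}\frac{\bar F(x+h)-\bar F(x)}{h}$. Interval Riemann integral: $\bar A=(IR)\int_a^b\bar f$ if for every $\varepsilon>0$ there is $\delta>0$ such that for every partition $a=t_0<\dots<t_n=b$ with mesh $<\delta$ and tags $\xi_i\in[t_{i-1},t_i]$, $d(\sum_i(t_i-t_{i-1})\bar f(\xi_i),\bar A)<\varepsilon$. *)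

theory Defs
  imports Complex_Main
begin

typedef interval = "{p :: real \<times> real. fst p < snd p}"
  by (rule exI[of _ "(0, 1)"]) simp

definition ic :: "interval \<Rightarrow> real" where
  "ic a = (fst (Rep_interval a) + snd (Rep_interval a)) / 2"

definition iw :: "interval \<Rightarrow> real" where
  "iw a = (snd (Rep_interval a) - fst (Rep_interval a)) / 2"

text \<open>The interval with centre c and half-width w (meaningful for w > 0).\<close>
definition mk_interval :: "real \<Rightarrow> real \<Rightarrow> interval" where
  "mk_interval c w = Abs_interval (c - w, c + w)"

definition iadd :: "interval \<Rightarrow> interval \<Rightarrow> interval" where
  "iadd a b = mk_interval (ic a + ic b) (iw a * iw b)"

definition isub :: "interval \<Rightarrow> interval \<Rightarrow> interval" where
  "isub a b = mk_interval (ic a - ic b) (iw a / iw b)"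

definition iscale :: "real \<Rightarrow> interval \<Rightarrow> interval" where
  "iscale k a = mk_interval (k * ic a) (iw a powr k)"

definition idiv :: "interval \<Rightarrow> real \<Rightarrow> interval" where
  "idiv c h = mk_interval (ic c / h) (iw c powr (1 / h))"

definition idist :: "interval \<Rightarrow> interval \<Rightarrow> real" where
  "idist a b = sqrt ((ic a - ic b)^2 + (ln (iw a) - ln (iw b))^2)"

text \<open>Neutral element of iadd: <0;1> = [-1,1]. Iterated sum g 1 + ... + g n.\<close>
definition izero :: interval where "izero = mk_interval 0 1"

primrec isum :: "(nat \<Rightarrow> interval) \<Rightarrow> nat \<Rightarrow> interval" where
  "isum g 0 = izero"
| "isum g (Suc n) = iadd (isum g n) (g (Suc n))"

definition IR_has_integral :: "(real \<Rightarrow> interval) \<Rightarrow> real \<Rightarrow> real \<Rightarrow> interval \<Rightarrow> bool" where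
  "IR_has_integral f a b A \<longleftrightarrow>
     (\<forall>\<epsilon>>0. \<exists>\<delta>>0. \<forall>(n::nat) (t::nat \<Rightarrow> real) (\<xi>::nat \<Rightarrow> real).
        t 0 = a \<and> t n = b \<and> (\<forall>i\<in>{1..n}. t (i - 1) < t i \<and> t i - t (i - 1) < \<delta>)
        \<and> (\<forall>i\<in>{1..n}. \<xi> i \<in> {t (i - 1) .. t i})
        \<longrightarrow> idist (isum (\<lambda>i. iscale (t i - t (i - 1)) (f (\<xi> i))) n) A < \<epsilon>)"

definition IR_integrable :: "(real \<Rightarrow> interval) \<Rightarrow> real \<Rightarrow> real \<Rightarrow> bool" where
  "IR_integrable f a b \<longleftrightarrow> (\<exists>A. IR_has_integral f a b A)"

definition IR_integral :: "(real \<Rightarrow> interval) \<Rightarrow> real \<Rightarrow> real \<Rightarrow> interval" where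
  "IR_integral f a b = (THE A. IR_has_integral f a b A)"

definition icont_at_within :: "(real \<Rightarrow> interval) \<Rightarrow> real \<Rightarrow> real set \<Rightarrow> bool" where
  "icont_at_within F x S \<longleftrightarrow>
     (\<forall>\<epsilon>>0. \<exists>\<delta>>0. \<forall>y\<in>S. \<bar>y - x\<bar> < \<delta> \<longrightarrow> idist (F y) (F x) < \<epsilon>)"

definition icont_on :: "real set \<Rightarrow> (real \<Rightarrow> interval) \<Rightarrow> bool" where
  "icont_on S F \<longleftrightarrow> (\<forall>x\<in>S. icont_at_within F x S)"

definition ihas_deriv_within :: "(real \<Rightarrow> interval) \<Rightarrow> interval \<Rightarrow> real \<Rightarrow> real set \<Rightarrow> bool" where
  "ihas_deriv_within F D x S \<longleftrightarrow>
     (\<forall>\<epsilon>>0. \<exists>\<delta>>0. \<forall>h. h \<noteq> 0 \<and> \<bar>h\<bar> < \<delta> \<and> x + h \<in> S \<longrightarrow>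
        idist (idiv (isub (F (x + h)) (F x)) h) D < \<epsilon>)"

end

theory Submission
  imports Defs "HOL-Analysis.Analysis"
begin

text \<open>The map \<open>\<langle>c;w\<rangle> \<mapsto> c + i ln w\<close> is a bijection from interval numbers onto \<open>\<complex>\<close> that
turns \<open>+\<close>, \<open>-\<close>, scaling by a real \<open>k\<close> and division by a real \<open>h\<close> into the corresponding
operations of the real vector space \<open>\<complex>\<close>, and the distance \<open>d\<close> into the Euclidean one.
Through it the interval Riemann integral of \<open>f\<close> is the ordinary Riemann integral of a
\<open>\<complex>\<close>-valued function \<open>g\<close>, and the theorem becomes the classical one: an integrable \<open>g\<close> is
bounded, so its indefinite integral \<open>G\<close> is Lipschitz; and \<open>\<parallel>G y - G x - (y - x) g x\<parallel>\<close> is at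
most \<open>\<bar>y - x\<bar>\<close> times the supremum of \<open>\<parallel>g s - g x\<parallel>\<close> for \<open>s\<close> between \<open>x\<close> and \<open>y\<close>, which gives
\<open>G' x = g x\<close> wherever \<open>g\<close> is continuous. That \<open>g\<close> is integrable on every \<open>[a, t]\<close> follows
from the Cauchy criterion, because each fine partition of \<open>[a, t]\<close> extends to a fine
partition of \<open>[a, b]\<close>.\<close>

section \<open>Interval numbers as complex numbers\<close>

definition ivec :: "interval \<Rightarrow> complex" where
  "ivec a = Complex (ic a) (ln (iw a))"

lemma iw_pos: "0 < iw a"
  using Rep_interval[of a] by (simp add: iw_def)

lemma ic_mk_interval: "0 < w \<Longrightarrow> ic (mk_interval c w) = c"
  by (simp add: ic_def mk_interval_def Abs_interval_inverse)

lemma iw_mk_interval: "0 < w \<Longrightarrow> iw (mk_interval c w) = w"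
  by (simp add: iw_def mk_interval_def Abs_interval_inverse)

lemma ivec_iadd: "ivec (iadd a b) = ivec a + ivec b"
  using iw_pos[of a] iw_pos[of b]
  by (simp add: iadd_def ic_mk_interval iw_mk_interval ivec_def complex_eq_iff ln_mult)

lemma ivec_isub: "ivec (isub a b) = ivec a - ivec b"
  using iw_pos[of a] iw_pos[of b]
  by (simp add: isub_def ic_mk_interval iw_mk_interval ivec_def complex_eq_iff ln_div)

lemma ivec_iscale: "ivec (iscale k a) = k *\<^sub>R ivec a"
  using iw_pos[of a]
  by (simp add: iscale_def ic_mk_interval iw_mk_interval ivec_def complex_eq_iff ln_powr)

lemma ivec_idiv: "ivec (idiv c h) = ivec c /\<^sub>R h"
  using iw_pos[of c]
  by (simp add: idiv_def ic_mk_interval iw_mk_interval ivec_def complex_eq_iff ln_powr field_simps)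

lemma ivec_izero: "ivec izero = 0"
  by (simp add: izero_def ic_mk_interval iw_mk_interval ivec_def complex_eq_iff)

lemma ivec_isum: "ivec (isum g n) = (\<Sum>i=1..n. ivec (g i))"
  by (induction n) (simp_all add: ivec_izero ivec_iadd)

lemma idist_ivec: "idist a b = dist (ivec a) (ivec b)"
  by (simp add: idist_def ivec_def dist_norm cmod_def)

lemma inj_ivec: "inj ivec"
proof (rule injI)
  fix a b assume "ivec a = ivec b"
  then have "ic a = ic b" "iw a = iw b"
    using iw_pos[of a] iw_pos[of b] by (auto simp: ivec_def)
  then have "Rep_interval a = Rep_interval b"
    by (simp add: ic_def iw_def prod_eq_iff)
  then show "a = b" by (simp add: Rep_interval_inject)
qed

lemma surj_ivec: "surj ivec"
proof (rule surjI)
  fix z show "ivec (mk_interval (Re z) (exp (Im z))) = z"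
    by (simp add: ic_mk_interval iw_mk_interval ivec_def complex_eq_iff)
qed

section \<open>Riemann integrals along tagged partitions\<close>

definition fine_tagged_partition ::
    "real \<Rightarrow> real \<Rightarrow> real \<Rightarrow> nat \<Rightarrow> (nat \<Rightarrow> real) \<Rightarrow> (nat \<Rightarrow> real) \<Rightarrow> bool" where
  "fine_tagged_partition \<delta> c d n t \<xi> \<longleftrightarrow>
     t 0 = c \<and> t n = d \<and> (\<forall>i\<in>{1..n}. t (i - 1) < t i \<and> t i - t (i - 1) < \<delta>)
     \<and> (\<forall>i\<in>{1..n}. \<xi> i \<in> {t (i - 1) .. t i})"

definition riemann_sum ::
    "(real \<Rightarrow> 'a::real_normed_vector) \<Rightarrow> (nat \<Rightarrow> real) \<Rightarrow> (nat \<Rightarrow> real) \<Rightarrow> nat \<Rightarrow> 'a" where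
  "riemann_sum g t \<xi> n = (\<Sum>i=1..n. (t i - t (i - 1)) *\<^sub>R g (\<xi> i))"

text \<open>For \<open>c > d\<close> there is no fine tagged partition of \<open>[c, d]\<close>, so every \<open>A\<close> is an integral;
hence the hypotheses \<open>c \<le> d\<close> below.\<close>

definition has_riemann_integral :: "(real \<Rightarrow> 'a::real_normed_vector) \<Rightarrow> real \<Rightarrow> real \<Rightarrow> 'a \<Rightarrow> bool" where
  "has_riemann_integral g c d A \<longleftrightarrow>
     (\<forall>\<epsilon>>0. \<exists>\<delta>>0. \<forall>n t \<xi>. fine_tagged_partition \<delta> c d n t \<xi> \<longrightarrow> norm (riemann_sum g t \<xi> n - A) < \<epsilon>)"

lemma IR_has_integral_iff:
  "IR_has_integral f c d A \<longleftrightarrow> has_riemann_integral (\<lambda>s. ivec (f s)) c d (ivec A)"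
  unfolding IR_has_integral_def has_riemann_integral_def fine_tagged_partition_def riemann_sum_def
  by (simp add: idist_ivec ivec_isum ivec_iscale dist_norm)

lemma fine_tagged_partition_less:
  assumes "fine_tagged_partition \<delta> c d n t \<xi>" "i < j" "j \<le> n"
  shows "t i < t j"
  using assms(2,3)
proof (induction j)
  case (Suc j)
  have "t j < t (Suc j)"
    using assms(1) Suc.prems(2) by (force simp: fine_tagged_partition_def)
  then show ?case
    using Suc by (cases "i = j") auto
qed simp

lemma fine_tagged_partition_le:
  "fine_tagged_partition \<delta> c d n t \<xi> \<Longrightarrow> i \<le> j \<Longrightarrow> j \<le> n \<Longrightarrow> t i \<le> t j"
  using fine_tagged_partition_less[of \<delta> c d n t \<xi> i j] by (cases "i = j") auto

lemma fine_tagged_partition_tag: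
  assumes P: "fine_tagged_partition \<delta> c d n t \<xi>" and i: "i \<in> {1..n}"
  shows "\<xi> i \<in> {c..d}"
proof -
  have "t 0 \<le> t (i - 1)" "t i \<le> t n"
    using i fine_tagged_partition_le[OF P] by auto
  with P i show ?thesis
    unfolding fine_tagged_partition_def by force
qed

lemma fine_tagged_partition_same_endpoints:
  "fine_tagged_partition \<delta> c c n t \<xi> \<Longrightarrow> n = 0"
  using fine_tagged_partition_less[of \<delta> c c n t \<xi> 0 n] by (auto simp: fine_tagged_partition_def)

lemma fine_tagged_partition_mono:
  "fine_tagged_partition \<delta> c d n t \<xi> \<Longrightarrow> \<delta> \<le> \<delta>' \<Longrightarrow> fine_tagged_partition \<delta>' c d n t \<xi>"
  unfolding fine_tagged_partition_def by force

lemma fine_tagged_partition_cover: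
  assumes P: "fine_tagged_partition \<delta> c d n t \<xi>" and s: "s \<in> {c..d}" and "0 < n"
  obtains i where "i \<in> {1..n}" "s \<in> {t (i - 1) .. t i}"
proof -
  define j where "j = (LEAST j. s \<le> t j)"
  have "s \<le> t n"
    using P s by (simp add: fine_tagged_partition_def)
  then have "s \<le> t j" "j \<le> n"
    unfolding j_def by (auto intro: LeastI Least_le)
  show ?thesis
  proof (cases "j = 0")
    case True
    then have "s = t 0"
      using P s \<open>s \<le> t j\<close> by (simp add: fine_tagged_partition_def)
    then show ?thesis
      using that[of 1] fine_tagged_partition_le[OF P, of 0 1] \<open>0 < n\<close> by simp
  next
    case False
    then have "t (j - 1) < s"
      using not_less_Least[of "j - 1" "\<lambda>j. s \<le> t j"] unfolding j_def by fastforce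
    then show ?thesis
      using that[of j] False \<open>s \<le> t j\<close> \<open>j \<le> n\<close> by simp
  qed
qed

definition uniform_grid :: "real \<Rightarrow> real \<Rightarrow> nat \<Rightarrow> nat \<Rightarrow> real" where
  "uniform_grid c d N i = c + real i * ((d - c) / real N)"

lemma fine_tagged_partition_uniform_grid:
  assumes "c < d" "0 < N" "(d - c) / real N < \<delta>"
  shows "fine_tagged_partition \<delta> c d N (uniform_grid c d N) (uniform_grid c d N)"
proof -
  have step: "uniform_grid c d N i - uniform_grid c d N (i - 1) = (d - c) / real N" if "1 \<le> i" for i
  proof -
    have "real (i - 1) = real i - 1"
      using that by (simp add: of_nat_diff)
    then show ?thesis
      by (simp add: uniform_grid_def algebra_simps diff_divide_distrib)
  qed
  have "0 < (d - c) / real N"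
    using assms by simp
  then have "uniform_grid c d N (i - 1) < uniform_grid c d N i
      \<and> uniform_grid c d N i - uniform_grid c d N (i - 1) < \<delta>" if "1 \<le> i" for i
    using step[OF that] assms(3) by linarith
  then show ?thesis
    using assms
    by (auto simp: fine_tagged_partition_def less_imp_le) (simp_all add: uniform_grid_def)
qed

lemma eventually_fine_tagged_partition_uniform_grid:
  assumes "c < d" "0 < \<delta>"
  shows "eventually (\<lambda>N. fine_tagged_partition \<delta> c d N (uniform_grid c d N) (uniform_grid c d N))
           sequentially"
proof -
  have "eventually (\<lambda>N. (d - c) / real N < \<delta>) sequentially"
    using order_tendstoD(2)[OF lim_const_over_n[of "d - c"] assms(2)] by simp
  moreover have "eventually (\<lambda>N. 0 < N) sequentially"
    by (simp add: eventually_gt_at_top)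
  ultimately show ?thesis
    by eventually_elim (use fine_tagged_partition_uniform_grid assms in blast)
qed

lemma fine_tagged_partition_exists:
  assumes "c \<le> d" "0 < \<delta>"
  obtains n t where "fine_tagged_partition \<delta> c d n t t"
proof (cases "c = d")
  case True
  then show ?thesis
    using that[of 0 "\<lambda>_. c"] by (simp add: fine_tagged_partition_def)
next
  case False
  then have "c < d"
    using assms(1) by simp
  then obtain N where "fine_tagged_partition \<delta> c d N (uniform_grid c d N) (uniform_grid c d N)"
    using eventually_fine_tagged_partition_uniform_grid[OF _ assms(2)]
    unfolding eventually_sequentially by blast
  then show ?thesis
    by (rule that)
qed

definition seq_append :: "nat \<Rightarrow> (nat \<Rightarrow> 'a) \<Rightarrow> (nat \<Rightarrow> 'a) \<Rightarrow> nat \<Rightarrow> 'a" where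
  "seq_append n t s i = (if i \<le> n then t i else s (i - n))"

lemma seq_append_pred:
  assumes "s 0 = t n" "n < i"
  shows "seq_append n t s (i - 1) = s (i - n - 1)"
  using assms by (cases "i = Suc n") (auto simp: seq_append_def)

lemma fine_tagged_partition_append:
  assumes P: "fine_tagged_partition \<delta> c d n t \<xi>" and Q: "fine_tagged_partition \<delta> d e m s \<zeta>"
  shows "fine_tagged_partition \<delta> c e (n + m) (seq_append n t s) (seq_append n \<xi> \<zeta>)"
proof -
  have "s 0 = t n"
    using P Q by (simp add: fine_tagged_partition_def)
  have "seq_append n t s (i - 1) < seq_append n t s i
      \<and> seq_append n t s i - seq_append n t s (i - 1) < \<delta>
      \<and> seq_append n \<xi> \<zeta> i \<in> {seq_append n t s (i - 1) .. seq_append n t s i}"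
    if i: "i \<in> {1..n + m}" for i
  proof (cases "i \<le> n")
    case True
    then show ?thesis
      using P i by (auto simp: fine_tagged_partition_def seq_append_def)
  next
    case False
    define k where "k = i - n"
    have k: "i = n + k" "k \<in> {1..m}"
      using False i by (auto simp: k_def)
    have "seq_append n t s (i - 1) = s (k - 1)"
      using seq_append_pred[of s t n i] \<open>s 0 = t n\<close> k by simp
    moreover have "s (k - 1) < s k \<and> s k - s (k - 1) < \<delta> \<and> \<zeta> k \<in> {s (k - 1) .. s k}"
      using Q k(2) by (simp add: fine_tagged_partition_def)
    ultimately show ?thesis
      using k by (simp add: seq_append_def)
  qed
  moreover have "seq_append n t s (n + m) = e"
    using P Q by (cases m) (auto simp: fine_tagged_partition_def seq_append_def)
  ultimately show ?thesis
    using P by (simp add: fine_tagged_partition_def seq_append_def)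
qed

lemma riemann_sum_Suc:
  "riemann_sum g t \<xi> (Suc n) = riemann_sum g t \<xi> n + (t (Suc n) - t n) *\<^sub>R g (\<xi> (Suc n))"
  by (simp add: riemann_sum_def)

lemma riemann_sum_append:
  assumes "s 0 = t n"
  shows "riemann_sum g (seq_append n t s) (seq_append n \<xi> \<zeta>) (n + m)
           = riemann_sum g t \<xi> n + riemann_sum g s \<zeta> m"
proof (induction m)
  case 0
  show ?case
    unfolding riemann_sum_def by (auto simp: seq_append_def intro!: sum.cong)
next
  case (Suc m)
  have "seq_append n t s (n + m) = s m"
    using assms by (simp add: seq_append_def)
  then show ?case
    using Suc.IH by (simp add: riemann_sum_Suc seq_append_def)
qed

lemma riemann_sum_update_tag:
  assumes "i \<in> {1..n}"
  shows "riemann_sum g t (\<xi>(i := s)) n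
           = riemann_sum g t \<xi> n + (t i - t (i - 1)) *\<^sub>R (g s - g (\<xi> i))"
proof -
  have "riemann_sum g t (\<xi>(i := s)) n - riemann_sum g t \<xi> n
      = (\<Sum>j=1..n. if j = i then (t i - t (i - 1)) *\<^sub>R (g s - g (\<xi> i)) else 0)"
    unfolding riemann_sum_def sum_subtractf[symmetric]
    by (intro sum.cong) (auto simp: scaleR_diff_right)
  then show ?thesis
    using assms by (simp add: algebra_simps)
qed

lemma norm_riemann_sum_sub_le:
  assumes "\<forall>i\<in>{1..n}. t (i - 1) \<le> t i" "\<forall>i\<in>{1..n}. norm (g (\<xi> i) - k) \<le> \<eta>"
  shows "norm (riemann_sum g t \<xi> n - (t n - t 0) *\<^sub>R k) \<le> (t n - t 0) * \<eta>"
  using assms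
proof (induction n)
  case (Suc n)
  have step: "t n \<le> t (Suc n)" "norm (g (\<xi> (Suc n)) - k) \<le> \<eta>"
    using Suc.prems(1)[rule_format, of "Suc n"] Suc.prems(2)[rule_format, of "Suc n"] by auto
  have "riemann_sum g t \<xi> (Suc n) - (t (Suc n) - t 0) *\<^sub>R k
      = (riemann_sum g t \<xi> n - (t n - t 0) *\<^sub>R k) + (t (Suc n) - t n) *\<^sub>R (g (\<xi> (Suc n)) - k)"
    by (simp add: riemann_sum_Suc algebra_simps)
  also have "norm \<dots> \<le> (t n - t 0) * \<eta> + (t (Suc n) - t n) * \<eta>"
    using Suc step by (intro norm_triangle_le add_mono) (auto intro: mult_left_mono)
  finally show ?case
    by (simp add: algebra_simps)
qed (simp add: riemann_sum_def)

lemma has_riemann_integral_unique: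
  assumes "has_riemann_integral g c d A" "has_riemann_integral g c d B" "c \<le> d"
  shows "A = B"
proof (rule ccontr)
  assume "A \<noteq> B"
  then have e: "0 < norm (A - B) / 2"
    by simp
  obtain \<delta>1 where "0 < \<delta>1" and \<delta>1: "\<forall>n t \<xi>. fine_tagged_partition \<delta>1 c d n t \<xi>
      \<longrightarrow> norm (riemann_sum g t \<xi> n - A) < norm (A - B) / 2"
    using assms(1) e unfolding has_riemann_integral_def by blast
  obtain \<delta>2 where "0 < \<delta>2" and \<delta>2: "\<forall>n t \<xi>. fine_tagged_partition \<delta>2 c d n t \<xi>
      \<longrightarrow> norm (riemann_sum g t \<xi> n - B) < norm (A - B) / 2"
    using assms(2) e unfolding has_riemann_integral_def by blast
  obtain n t where P: "fine_tagged_partition (min \<delta>1 \<delta>2) c d n t t"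
    using fine_tagged_partition_exists[of c d "min \<delta>1 \<delta>2"] assms(3) \<open>0 < \<delta>1\<close> \<open>0 < \<delta>2\<close> by auto
  have "norm (A - riemann_sum g t t n) < norm (A - B) / 2"
    using \<delta>1 fine_tagged_partition_mono[OF P] by (simp add: norm_minus_commute)
  moreover have "norm (riemann_sum g t t n - B) < norm (A - B) / 2"
    using \<delta>2 fine_tagged_partition_mono[OF P] by simp
  ultimately show False
    using norm_diff_triangle_less by fastforce
qed

lemma has_riemann_integral_refl: "has_riemann_integral g c c 0"
  unfolding has_riemann_integral_def
  by (auto dest!: fine_tagged_partition_same_endpoints simp: riemann_sum_def intro: exI[of _ 1])

lemma has_riemann_integral_bounded:
  assumes A: "has_riemann_integral g c d A" and "c < d"
  obtains M where "\<forall>s\<in>{c..d}. norm (g s) \<le> M"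
proof -
  obtain \<delta> where "0 < \<delta>" and \<delta>: "\<forall>n t \<xi>. fine_tagged_partition \<delta> c d n t \<xi>
      \<longrightarrow> norm (riemann_sum g t \<xi> n - A) < 1"
    using A unfolding has_riemann_integral_def by (meson zero_less_one)
  obtain n t where P: "fine_tagged_partition \<delta> c d n t t"
    using fine_tagged_partition_exists[of c d \<delta>] \<open>c < d\<close> \<open>0 < \<delta>\<close> by auto
  have "0 < n"
    using P \<open>c < d\<close> by (cases n) (auto simp: fine_tagged_partition_def)
  have step_pos: "0 < t i - t (i - 1)" if "i \<in> {1..n}" for i
    using P that by (simp add: fine_tagged_partition_def)
  txt \<open>Moving the \<open>i\<close>-th tag to \<open>s\<close> changes the sum by \<open>(t i - t (i - 1)) (g s - g (t i))\<close>,
    and both sums lie within \<open>1\<close> of \<open>A\<close>.\<close>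
  define M where "M = (\<Sum>i=1..n. norm (g (t i)) + 2 / (t i - t (i - 1)))"
  have "norm (g s) \<le> M" if s: "s \<in> {c..d}" for s
  proof -
    obtain i where i: "i \<in> {1..n}" "s \<in> {t (i - 1) .. t i}"
      using fine_tagged_partition_cover[OF P s \<open>0 < n\<close>] by blast
    have "fine_tagged_partition \<delta> c d n t (t(i := s))"
      using P i by (auto simp: fine_tagged_partition_def)
    then have "norm (riemann_sum g t (t(i := s)) n - A) < 1" "norm (A - riemann_sum g t t n) < 1"
      using \<delta> P by (auto simp: norm_minus_commute)
    then have "norm (riemann_sum g t (t(i := s)) n - riemann_sum g t t n) < 2"
      using norm_diff_triangle_less by fastforce
    then have "(t i - t (i - 1)) * norm (g s - g (t i)) < 2"
      using riemann_sum_update_tag[OF i(1), of g t t s] step_pos[OF i(1)] by simp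
    then have "norm (g s - g (t i)) < 2 / (t i - t (i - 1))"
      using step_pos[OF i(1)] by (simp add: pos_less_divide_eq mult.commute)
    then have "norm (g s) < norm (g (t i)) + 2 / (t i - t (i - 1))"
      using norm_triangle_sub[of "g s" "g (t i)"] by linarith
    also have "\<dots> \<le> M"
    proof (unfold M_def, intro member_le_sum i(1))
      fix j assume "j \<in> {1..n} - {i}"
      then have "0 < 2 / (t j - t (j - 1))"
        using step_pos by simp
      then show "0 \<le> norm (g (t j)) + 2 / (t j - t (j - 1))"
        using norm_ge_zero[of "g (t j)"] by linarith
    qed simp
    finally show ?thesis by simp
  qed
  then show ?thesis
    using that by blast
qed

lemma has_riemann_integral_cauchy:
  fixes g :: "real \<Rightarrow> 'a::banach"
  assumes "c < d"
    and cauchy: "\<And>\<epsilon>. 0 < \<epsilon> \<Longrightarrow> \<exists>\<delta>>0. \<forall>n t \<xi> m s \<zeta>.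
           fine_tagged_partition \<delta> c d n t \<xi> \<and> fine_tagged_partition \<delta> c d m s \<zeta>
           \<longrightarrow> norm (riemann_sum g t \<xi> n - riemann_sum g s \<zeta> m) < \<epsilon>"
  obtains L where "has_riemann_integral g c d L"
proof -
  define S where "S N = riemann_sum g (uniform_grid c d N) (uniform_grid c d N) N" for N
  have "Cauchy S"
  proof (rule CauchyI)
    fix \<epsilon> :: real assume "0 < \<epsilon>"
    then obtain \<delta> where "0 < \<delta>" and \<delta>: "\<forall>n t \<xi> m s \<zeta>.
        fine_tagged_partition \<delta> c d n t \<xi> \<and> fine_tagged_partition \<delta> c d m s \<zeta>
        \<longrightarrow> norm (riemann_sum g t \<xi> n - riemann_sum g s \<zeta> m) < \<epsilon>"
      using cauchy by blast
    obtain M where "\<forall>N\<ge>M. fine_tagged_partition \<delta> c d N (uniform_grid c d N) (uniform_grid c d N)"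
      using eventually_fine_tagged_partition_uniform_grid[OF \<open>c < d\<close> \<open>0 < \<delta>\<close>]
      unfolding eventually_sequentially by blast
    then show "\<exists>M. \<forall>m\<ge>M. \<forall>n\<ge>M. norm (S m - S n) < \<epsilon>"
      using \<delta> unfolding S_def by blast
  qed
  then obtain L where L: "S \<longlonglongrightarrow> L"
    using Cauchy_convergent_iff convergent_def by blast
  have "has_riemann_integral g c d L"
    unfolding has_riemann_integral_def
  proof (intro allI impI)
    fix \<epsilon> :: real assume "0 < \<epsilon>"
    then obtain \<delta> where "0 < \<delta>" and \<delta>: "\<forall>n t \<xi> m s \<zeta>.
        fine_tagged_partition \<delta> c d n t \<xi> \<and> fine_tagged_partition \<delta> c d m s \<zeta>
        \<longrightarrow> norm (riemann_sum g t \<xi> n - riemann_sum g s \<zeta> m) < \<epsilon> / 2"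
      using cauchy[of "\<epsilon> / 2"] by auto
    have "eventually (\<lambda>N. fine_tagged_partition \<delta> c d N (uniform_grid c d N) (uniform_grid c d N)
        \<and> norm (S N - L) < \<epsilon> / 2) sequentially"
      using eventually_fine_tagged_partition_uniform_grid[OF \<open>c < d\<close> \<open>0 < \<delta>\<close>]
        L[unfolded tendsto_iff, rule_format, of "\<epsilon> / 2"] \<open>0 < \<epsilon>\<close>
      by (auto simp: dist_norm elim: eventually_conj)
    then obtain N where "fine_tagged_partition \<delta> c d N (uniform_grid c d N) (uniform_grid c d N)"
        and "norm (S N - L) < \<epsilon> / 2"
      using eventually_happens by fastforce
    then have "norm (riemann_sum g t \<xi> n - L) < \<epsilon>" if "fine_tagged_partition \<delta> c d n t \<xi>" for n t \<xi>
      using \<delta> that norm_diff_triangle_less[of "riemann_sum g t \<xi> n" "S N" "\<epsilon> / 2" L "\<epsilon> / 2"]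
      unfolding S_def by auto
    then show "\<exists>\<delta>>0. \<forall>n t \<xi>. fine_tagged_partition \<delta> c d n t \<xi> \<longrightarrow> norm (riemann_sum g t \<xi> n - L) < \<epsilon>"
      using \<open>0 < \<delta>\<close> by blast
  qed
  then show ?thesis
    using that by blast
qed

lemma has_riemann_integral_subinterval:
  fixes g :: "real \<Rightarrow> 'a::banach"
  assumes A: "has_riemann_integral g a b A" and "a \<le> t" "t \<le> b"
  obtains L where "has_riemann_integral g a t L"
proof (cases "a = t")
  case True
  then show ?thesis
    using has_riemann_integral_refl that by blast
next
  case False
  have "\<exists>\<delta>>0. \<forall>n p \<xi> m q \<zeta>. fine_tagged_partition \<delta> a t n p \<xi> \<and> fine_tagged_partition \<delta> a t m q \<zeta>
      \<longrightarrow> norm (riemann_sum g p \<xi> n - riemann_sum g q \<zeta> m) < \<epsilon>" if "0 < \<epsilon>" for \<epsilon>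
  proof -
    obtain \<delta> where "0 < \<delta>" and \<delta>: "\<forall>n p \<xi>. fine_tagged_partition \<delta> a b n p \<xi>
        \<longrightarrow> norm (riemann_sum g p \<xi> n - A) < \<epsilon> / 2"
      using A \<open>0 < \<epsilon>\<close> unfolding has_riemann_integral_def by (meson half_gt_zero)
    obtain k u where u: "fine_tagged_partition \<delta> t b k u u"
      using fine_tagged_partition_exists[OF \<open>t \<le> b\<close> \<open>0 < \<delta>\<close>] by blast
    have close: "norm (riemann_sum g p \<xi> n + riemann_sum g u u k - A) < \<epsilon> / 2"
      if P: "fine_tagged_partition \<delta> a t n p \<xi>" for n p \<xi>
    proof -
      have "u 0 = p n"
        using P u by (simp add: fine_tagged_partition_def)
      then show ?thesis
        using \<delta>[rule_format, OF fine_tagged_partition_append[OF P u]]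
          riemann_sum_append[of u p n g \<xi> u k] by simp
    qed
    have "norm (riemann_sum g p \<xi> n - riemann_sum g q \<zeta> m) < \<epsilon>"
      if "fine_tagged_partition \<delta> a t n p \<xi>" "fine_tagged_partition \<delta> a t m q \<zeta>" for n p \<xi> m q \<zeta>
      using norm_diff_triangle_less[OF close[OF that(1)]
          close[OF that(2), unfolded norm_minus_commute]]
      by simp
    then show ?thesis
      using \<open>0 < \<delta>\<close> by blast
  qed
  then show ?thesis
    using has_riemann_integral_cauchy[of a t g] False \<open>a \<le> t\<close> that by force
qed

lemma has_riemann_integral_diff_approx:
  assumes Gx: "has_riemann_integral g a x Gx" and Gy: "has_riemann_integral g a y Gy"
    and "a \<le> x" "x \<le> y" "0 < \<epsilon>"
  obtains \<delta> m q where "fine_tagged_partition \<delta> x y m q q"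
    "norm (riemann_sum g q q m - (Gy - Gx)) < \<epsilon>"
proof -
  obtain \<delta>x where "0 < \<delta>x" and \<delta>x: "\<forall>n t \<xi>. fine_tagged_partition \<delta>x a x n t \<xi>
      \<longrightarrow> norm (riemann_sum g t \<xi> n - Gx) < \<epsilon> / 2"
    using Gx \<open>0 < \<epsilon>\<close> unfolding has_riemann_integral_def by (meson half_gt_zero)
  obtain \<delta>y where "0 < \<delta>y" and \<delta>y: "\<forall>n t \<xi>. fine_tagged_partition \<delta>y a y n t \<xi>
      \<longrightarrow> norm (riemann_sum g t \<xi> n - Gy) < \<epsilon> / 2"
    using Gy \<open>0 < \<epsilon>\<close> unfolding has_riemann_integral_def by (meson half_gt_zero)
  define \<delta> where "\<delta> = min \<delta>x \<delta>y"
  have "0 < \<delta>"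
    using \<open>0 < \<delta>x\<close> \<open>0 < \<delta>y\<close> by (simp add: \<delta>_def)
  obtain n p where P: "fine_tagged_partition \<delta> a x n p p"
    using fine_tagged_partition_exists[OF \<open>a \<le> x\<close> \<open>0 < \<delta>\<close>] by blast
  obtain m q where Q: "fine_tagged_partition \<delta> x y m q q"
    using fine_tagged_partition_exists[OF \<open>x \<le> y\<close> \<open>0 < \<delta>\<close>] by blast
  have Rx: "norm (riemann_sum g p p n - Gx) < \<epsilon> / 2"
    using \<delta>x fine_tagged_partition_mono[OF P, of \<delta>x] by (simp add: \<delta>_def)
  have "norm (riemann_sum g (seq_append n p q) (seq_append n p q) (n + m) - Gy) < \<epsilon> / 2"
    using \<delta>y fine_tagged_partition_mono[OF fine_tagged_partition_append[OF P Q], of \<delta>y]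
    by (simp add: \<delta>_def)
  moreover have "q 0 = p n"
    using P Q by (simp add: fine_tagged_partition_def)
  ultimately have Ry: "norm (riemann_sum g p p n + riemann_sum g q q m - Gy) < \<epsilon> / 2"
    using riemann_sum_append[of q p n g p q m] by simp
  have "norm (riemann_sum g q q m - (Gy - Gx))
      = norm ((riemann_sum g p p n + riemann_sum g q q m - Gy) - (riemann_sum g p p n - Gx))"
    by (simp add: algebra_simps)
  also have "\<dots> \<le> norm (riemann_sum g p p n + riemann_sum g q q m - Gy)
      + norm (riemann_sum g p p n - Gx)"
    by (rule norm_triangle_ineq4)
  also have "\<dots> < \<epsilon>"
    using Rx Ry by linarith
  finally show ?thesis
    using Q that by blast
qed

lemma has_riemann_integral_increment:
  assumes Gx: "has_riemann_integral g a x Gx" and Gy: "has_riemann_integral g a y Gy"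
    and "a \<le> x" "x \<le> y" and bound: "\<forall>s\<in>{x..y}. norm (g s - k) \<le> \<eta>"
  shows "norm (Gy - Gx - (y - x) *\<^sub>R k) \<le> (y - x) * \<eta>"
proof (rule field_le_epsilon)
  fix \<epsilon> :: real assume "0 < \<epsilon>"
  then obtain \<delta> m q where Q: "fine_tagged_partition \<delta> x y m q q"
      and R: "norm (riemann_sum g q q m - (Gy - Gx)) < \<epsilon>"
    using has_riemann_integral_diff_approx[OF Gx Gy \<open>a \<le> x\<close> \<open>x \<le> y\<close>] by blast
  have "q 0 = x" "q m = y"
    using Q by (simp_all add: fine_tagged_partition_def)
  then have Rk: "norm (riemann_sum g q q m - (y - x) *\<^sub>R k) \<le> (y - x) * \<eta>"
    using norm_riemann_sum_sub_le[of m q g q k \<eta>] Q bound fine_tagged_partition_tag[OF Q]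
    by (auto simp: fine_tagged_partition_def less_imp_le)
  have "norm (Gy - Gx - (y - x) *\<^sub>R k)
      = norm ((riemann_sum g q q m - (y - x) *\<^sub>R k) - (riemann_sum g q q m - (Gy - Gx)))"
    by (simp add: algebra_simps)
  also have "\<dots> \<le> norm (riemann_sum g q q m - (y - x) *\<^sub>R k)
      + norm (riemann_sum g q q m - (Gy - Gx))"
    by (rule norm_triangle_ineq4)
  also have "\<dots> \<le> (y - x) * \<eta> + \<epsilon>"
    using Rk R by linarith
  finally show "norm (Gy - Gx - (y - x) *\<^sub>R k) \<le> (y - x) * \<eta> + \<epsilon>" .
qed

section \<open>Indefinite integrals\<close>

lemma indefinite_riemann_integral_increment:
  assumes G: "\<forall>t\<in>{a..b}. has_riemann_integral g a t (G t)" and "x \<in> {a..b}" "y \<in> {a..b}"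
    and bound: "\<forall>s\<in>{min x y..max x y}. norm (g s - k) \<le> \<eta>"
  shows "norm (G y - G x - (y - x) *\<^sub>R k) \<le> \<bar>y - x\<bar> * \<eta>"
proof (cases "x \<le> y")
  case True
  then show ?thesis
    using has_riemann_integral_increment[of g a x "G x" y "G y" k \<eta>] G assms(2,3) bound by auto
next
  case False
  then have "norm (G x - G y - (x - y) *\<^sub>R k) \<le> (x - y) * \<eta>"
    using has_riemann_integral_increment[of g a y "G y" x "G x" k \<eta>] G assms(2,3) bound by auto
  moreover have "G x - G y - (x - y) *\<^sub>R k = - (G y - G x - (y - x) *\<^sub>R k)"
    by (simp add: algebra_simps)
  ultimately show ?thesis
    using False by (simp only: norm_minus_cancel) simp
qed

lemma indefinite_riemann_integral_lipschitz:
  assumes "a < b" and G: "\<forall>t\<in>{a..b}. has_riemann_integral g a t (G t)"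
  obtains M where "M-lipschitz_on {a..b} G"
proof -
  obtain M where M: "\<forall>s\<in>{a..b}. norm (g s) \<le> M"
    using has_riemann_integral_bounded[of g a b "G b"] G \<open>a < b\<close> by auto
  have "norm (g a) \<le> M"
    using M \<open>a < b\<close> by simp
  then have "0 \<le> M"
    using norm_ge_zero order_trans by blast
  have "dist (G y) (G x) \<le> M * dist y x" if "x \<in> {a..b}" "y \<in> {a..b}" for x y
  proof -
    have "{min x y..max x y} \<subseteq> {a..b}"
      using that by auto
    then have "\<forall>s\<in>{min x y..max x y}. norm (g s - 0) \<le> M"
      using M by (simp add: subset_iff)
    then show ?thesis
      using indefinite_riemann_integral_increment[OF G that, of 0 M]
      by (simp add: dist_norm mult.commute)
  qed
  then have "M-lipschitz_on {a..b} G"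
    using \<open>0 \<le> M\<close> by (intro lipschitz_onI) auto
  then show ?thesis
    by (rule that)
qed

lemma indefinite_riemann_integral_has_vector_derivative:
  assumes G: "\<forall>t\<in>{a..b}. has_riemann_integral g a t (G t)" and x: "x \<in> {a..b}"
    and cont: "continuous (at x within {a..b}) g"
  shows "(G has_vector_derivative g x) (at x within {a..b})"
  unfolding has_vector_derivative_def has_derivative_within_alt
proof (intro conjI allI impI bounded_linear_scaleR_left)
  fix \<epsilon> :: real assume "0 < \<epsilon>"
  then obtain \<delta> where "0 < \<delta>" and \<delta>: "\<forall>s\<in>{a..b}. dist s x < \<delta> \<longrightarrow> dist (g s) (g x) < \<epsilon>"
    using cont unfolding continuous_within_eps_delta by blast
  have "norm (G y - G x - (y - x) *\<^sub>R g x) \<le> \<epsilon> * norm (y - x)"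
    if y: "y \<in> {a..b}" "norm (y - x) < \<delta>" for y
  proof -
    have "s \<in> {a..b} \<and> dist s x < \<delta>" if "s \<in> {min x y..max x y}" for s
      using that x y by (auto simp: dist_real_def)
    then have "\<forall>s\<in>{min x y..max x y}. norm (g s - g x) \<le> \<epsilon>"
      using \<delta> by (auto simp: dist_norm less_imp_le)
    then show ?thesis
      using indefinite_riemann_integral_increment[OF G x y(1)] by (simp add: mult.commute)
  qed
  then show "\<exists>\<delta>>0. \<forall>y\<in>{a..b}. norm (y - x) < \<delta> \<longrightarrow>
      norm (G y - G x - (y - x) *\<^sub>R g x) \<le> \<epsilon> * norm (y - x)"
    using \<open>0 < \<delta>\<close> by blast
qed

section \<open>Back to interval numbers\<close>

lemma icont_on_iff_continuous_on: "icont_on S F \<longleftrightarrow> continuous_on S (\<lambda>y. ivec (F y))"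
  unfolding icont_on_def icont_at_within_def continuous_on_iff
  by (simp add: idist_ivec dist_real_def)

lemma icont_at_within_iff_continuous:
  "icont_at_within F x S \<longleftrightarrow> continuous (at x within S) (\<lambda>y. ivec (F y))"
  unfolding icont_at_within_def continuous_within_eps_delta
  by (simp add: idist_ivec dist_real_def)

lemma has_vector_derivative_imp_ihas_deriv_within:
  assumes "((\<lambda>y. ivec (F y)) has_vector_derivative ivec D) (at x within S)"
  shows "ihas_deriv_within F D x S"
  unfolding ihas_deriv_within_def
proof (intro allI impI)
  fix \<epsilon> :: real assume "0 < \<epsilon>"
  then obtain \<delta> where "0 < \<delta>" and \<delta>: "\<forall>y\<in>S. norm (y - x) < \<delta> \<longrightarrow>
      norm (ivec (F y) - ivec (F x) - (y - x) *\<^sub>R ivec D) \<le> \<epsilon> / 2 * norm (y - x)"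
    using assms unfolding has_vector_derivative_def has_derivative_within_alt
    by (meson half_gt_zero)
  have "idist (idiv (isub (F (x + h)) (F x)) h) D < \<epsilon>"
    if h: "h \<noteq> 0" "\<bar>h\<bar> < \<delta>" "x + h \<in> S" for h
  proof -
    have "ivec (idiv (isub (F (x + h)) (F x)) h) - ivec D
        = (ivec (F (x + h)) - ivec (F x) - h *\<^sub>R ivec D) /\<^sub>R h"
      using h(1) by (simp add: ivec_idiv ivec_isub algebra_simps)
    then have "idist (idiv (isub (F (x + h)) (F x)) h) D
        = norm (ivec (F (x + h)) - ivec (F x) - h *\<^sub>R ivec D) / \<bar>h\<bar>"
      by (simp add: idist_ivec dist_norm divide_inverse_commute)
    also have "\<dots> \<le> \<epsilon> / 2"
      using \<delta>[rule_format, of "x + h"] h by (simp add: divide_le_eq mult.commute)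
    finally show ?thesis
      using \<open>0 < \<epsilon>\<close> by linarith
  qed
  then show "\<exists>\<delta>>0. \<forall>h. h \<noteq> 0 \<and> \<bar>h\<bar> < \<delta> \<and> x + h \<in> S \<longrightarrow>
      idist (idiv (isub (F (x + h)) (F x)) h) D < \<epsilon>"
    using \<open>0 < \<delta>\<close> by blast
qed

lemma IR_integral_eq:
  assumes "IR_has_integral f c d A" "c \<le> d"
  shows "IR_integral f c d = A"
  unfolding IR_integral_def
proof (rule the_equality)
  fix B assume "IR_has_integral f c d B"
  then have "ivec B = ivec A"
    using assms has_riemann_integral_unique by (metis IR_has_integral_iff)
  then show "B = A"
    by (rule injD[OF inj_ivec])
qed (rule assms(1))

lemma IR_has_integral_subinterval:
  assumes "IR_integrable f a b" "a \<le> t" "t \<le> b"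
  shows "IR_has_integral f a t (IR_integral f a t)"
proof -
  obtain A where "has_riemann_integral (\<lambda>s. ivec (f s)) a b (ivec A)"
    using assms(1) by (auto simp: IR_integrable_def IR_has_integral_iff)
  then obtain L where "has_riemann_integral (\<lambda>s. ivec (f s)) a t L"
    using has_riemann_integral_subinterval assms(2,3) by blast
  moreover obtain B where "ivec B = L"
    using surj_ivec by (metis surjD)
  ultimately have "IR_has_integral f a t B"
    by (simp add: IR_has_integral_iff)
  then show ?thesis
    using IR_integral_eq assms(2) by simp
qed

theorem theorem5p6:
  fixes f F :: "real \<Rightarrow> interval" and a b :: real
  assumes "a < b"
    and "IR_integrable f a b"
    and "\<forall>t\<in>{a..b}. F t = IR_integral f a t"
  shows "icont_on {a..b} F
    \<and> (\<forall>x\<in>{a..b}. icont_at_within f x {a..b} \<longrightarrow> ihas_deriv_within F (f x) x {a..b})"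
proof -
  have G: "\<forall>t\<in>{a..b}. has_riemann_integral (\<lambda>s. ivec (f s)) a t (ivec (F t))"
    using IR_has_integral_subinterval[OF assms(2)] assms(3) by (simp add: IR_has_integral_iff)
  obtain M where "M-lipschitz_on {a..b} (\<lambda>y. ivec (F y))"
    using indefinite_riemann_integral_lipschitz[OF assms(1) G] by blast
  then have "icont_on {a..b} F"
    by (simp add: icont_on_iff_continuous_on lipschitz_on_continuous_on)
  moreover have "ihas_deriv_within F (f x) x {a..b}"
    if "x \<in> {a..b}" "icont_at_within f x {a..b}" for x
  proof (rule has_vector_derivative_imp_ihas_deriv_within)
    have "continuous (at x within {a..b}) (\<lambda>s. ivec (f s))"
      using that(2) by (simp only: icont_at_within_iff_continuous)
    then show "((\<lambda>y. ivec (F y)) has_vector_derivative ivec (f x)) (at x within {a..b})"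
      by (rule indefinite_riemann_integral_has_vector_derivative[OF G that(1)])
  qed
  ultimately show ?thesis
    by blast
qed

end
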